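(* Let $A$ be a minimally AP-irreducible sign pattern matrix of order $n$ with all diagonal entries equal to $0$. If $A[\alpha,\beta]$ contains no $+$ for any two distinct irreducible components $\alpha$ and $\beta$ of $A_+$, then $A$ has at most $2n-2$ nonzero entries. Consequently, at least two rows of $A$ and at least two columns of $A$ contain precisely one nonzero entry.
   Context: A sign pattern matrix has entries in $\{+,-,0\}$. The digraph $D(M)$ of an $n\times n$ matrix $M$ has vertex set $\{1,\dots,n\}$ and an arc $i\to j$ iff $m_{ij}\neq0$; $M$ is irreducible if $n=1$ or $D(M)$ is strongly connected. For a sign pattern $A$: $A_+$ is obtained by replacing every entry that is not $+$ by $0$; $A_-$ by replacing every entry that is not $-$ by $0$; $B_A=A_+-(A_-)^T$, i.e. $(B_A)_{ij}=+$ if $a_{ij}=+$ or $a_{ji}=-$, and $0$ otherwise. An irreducible sign pattern $A$ is AP-irreducible if every row and every column contains a $+$ and $B_A$ is irreducible; $A$ is minimally AP-irreducible if it is AP-irreducible and does not remain AP-irreducible after replacing any single nonzero entry by $0$. $A[\alpha,\beta]$ is the submatrix with rows in $\alpha$ and columns in $\beta$, $A[\alpha]=A[\alpha,\alpha]$. The irreducible components of a sign pattern $M$ of order $n$ are the pairwise disjoint nonempty sets partitioning $\{1,\dots,n\}$ that are maximal with respect to $M[\alpha]$ being irreducible (the vertex sets of the strongly connected components of $D(M)$). *)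

theory Defs
  imports Main
begin

datatype sign = Pos | Neg | Zero

text \<open>A sign pattern matrix of order n is modelled as a function
  nat \<Rightarrow> nat \<Rightarrow> sign whose entries with indices i, j < n
  (0-based) are the matrix entries; other values are irrelevant.\<close>

type_synonym sign_matrix = "nat \<Rightarrow> nat \<Rightarrow> sign"

definition arcs_on :: "sign_matrix \<Rightarrow> nat set \<Rightarrow> (nat \<times> nat) set" where
  "arcs_on M S = {(i, j). i \<in> S \<and> j \<in> S \<and> M i j \<noteq> Zero}"

definition irreducible_on :: "sign_matrix \<Rightarrow> nat set \<Rightarrow> bool" where
  "irreducible_on M S \<longleftrightarrow>
     card S = 1 \<or> (\<forall>i\<in>S. \<forall>j\<in>S. (i, j) \<in> (arcs_on M S)\<^sup>*)"

definition irreducible :: "sign_matrix \<Rightarrow> nat \<Rightarrow> bool" where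
  "irreducible M n \<longleftrightarrow> irreducible_on M {0..<n}"

definition pos_part :: "sign_matrix \<Rightarrow> sign_matrix" where
  "pos_part A = (\<lambda>i j. if A i j = Pos then Pos else Zero)"

definition neg_part :: "sign_matrix \<Rightarrow> sign_matrix" where
  "neg_part A = (\<lambda>i j. if A i j = Neg then Neg else Zero)"

text \<open>B_A = A_+ - (A_-)^T.\<close>
definition B_mat :: "sign_matrix \<Rightarrow> sign_matrix" where
  "B_mat A = (\<lambda>i j. if pos_part A i j = Pos \<or> neg_part A j i = Neg then Pos else Zero)"

definition AP_irreducible :: "sign_matrix \<Rightarrow> nat \<Rightarrow> bool" where
  "AP_irreducible A n \<longleftrightarrow>
     irreducible A n \<and>
     (\<forall>i<n. \<exists>j<n. A i j = Pos) \<and>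
     (\<forall>j<n. \<exists>i<n. A i j = Pos) \<and>
     irreducible (B_mat A) n"

definition zero_entry :: "sign_matrix \<Rightarrow> nat \<Rightarrow> nat \<Rightarrow> sign_matrix" where
  "zero_entry A i j = A(i := (A i)(j := Zero))"

definition minimally_AP_irreducible :: "sign_matrix \<Rightarrow> nat \<Rightarrow> bool" where
  "minimally_AP_irreducible A n \<longleftrightarrow>
     AP_irreducible A n \<and>
     (\<forall>i<n. \<forall>j<n. A i j \<noteq> Zero \<longrightarrow> \<not> AP_irreducible (zero_entry A i j) n)"

definition irr_component :: "sign_matrix \<Rightarrow> nat \<Rightarrow> nat set \<Rightarrow> bool" where
  "irr_component M n \<alpha> \<longleftrightarrow>
     \<alpha> \<noteq> {} \<and> \<alpha> \<subseteq> {0..<n} \<and> irreducible_on M \<alpha> \<and>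
     (\<forall>\<beta>. \<alpha> \<subset> \<beta> \<and> \<beta> \<subseteq> {0..<n} \<longrightarrow> \<not> irreducible_on M \<beta>)"

definition nnz :: "sign_matrix \<Rightarrow> nat \<Rightarrow> nat" where
  "nnz A n = card {(i, j). i < n \<and> j < n \<and> A i j \<noteq> Zero}"

definition row_nnz :: "sign_matrix \<Rightarrow> nat \<Rightarrow> nat \<Rightarrow> nat" where
  "row_nnz A n i = card {j. j < n \<and> A i j \<noteq> Zero}"

definition col_nnz :: "sign_matrix \<Rightarrow> nat \<Rightarrow> nat \<Rightarrow> nat" where
  "col_nnz A n j = card {i. i < n \<and> A i j \<noteq> Zero}"

end

theory Submission imports Defs begin

text \<open>The hypothesis says that every positive arc of \<open>A\<close> lies inside a strongly connected
  component of \<open>D(A\<^sub>+)\<close>. If there are \<open>k\<close> such components, an out-tree and an in-tree of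
  positive arcs in each of them (at most \<open>2(n - k)\<close> arcs) make every component strongly connected,
  and at most \<open>2(k - 1)\<close> negative arcs link the contracted components in both directions. The
  subpattern \<open>A'\<close> of \<open>A\<close> carried by these arcs is AP-irreducible: \<open>D(A')\<close> is strongly connected;
  because the diagonal is zero, every vertex lies in a nontrivial component and so has positive
  arcs in and out; and reversing the negative arcs keeps \<open>D(B\<^bsub>A'\<^esub>)\<close> strongly connected, since
  positive arcs can be traversed backwards inside their components. Minimality forces \<open>A = A'\<close>,
  so \<open>A\<close> has at most \<open>2n - 2\<close> nonzero entries, and since no row or column is zero, at least two
  rows and two columns have exactly one.\<close>

lemma rtrancl_exit_arc:
  assumes "(s, v) \<in> E\<^sup>*" "s \<in> R" "v \<notin> R"
  obtains u w where "(u, w) \<in> E" "u \<in> R" "w \<notin> R"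
  using assms(1,3) that
proof (induction rule: rtrancl_induct)
  case base
  then show ?case using assms(2) by simp
next
  case (step y z)
  then show ?case by (cases "y \<in> R") auto
qed

lemma rtrancl_Image_subset:
  assumes "E \<subseteq> V \<times> V" "S \<subseteq> V"
  shows "E\<^sup>* `` S \<subseteq> V"
proof -
  have "E `` V \<subseteq> V" using assms(1) by blast
  then have "E\<^sup>* `` V = V" by (rule Image_closed_trancl)
  then show ?thesis using assms(2) by blast
qed

lemma rtrancl_cycle_in_Domain_Range:
  assumes "(x, y) \<in> R\<^sup>*" "(y, x) \<in> R\<^sup>*" "x \<noteq> y"
  shows "x \<in> Domain R" "x \<in> Range R"
  using assms by (auto elim: converse_rtranclE rtranclE)

lemma rtrancl_within_scc:
  fixes E :: "'a rel" and i :: 'a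
  defines "C \<equiv> {x. (i, x) \<in> E\<^sup>* \<and> (x, i) \<in> E\<^sup>*}"
  assumes "(a, z) \<in> E\<^sup>*" "(z, b) \<in> E\<^sup>*" "a \<in> C" "b \<in> C"
  shows "(a, z) \<in> (Restr E C)\<^sup>*"
  using assms(2,3)
proof (induction rule: rtrancl_induct)
  case base
  then show ?case by simp
next
  case (step y z)
  have "(i, y) \<in> E\<^sup>*" "(i, z) \<in> E\<^sup>*"
    using \<open>a \<in> C\<close> step.hyps unfolding C_def by (auto intro: rtrancl_trans)
  moreover have "(z, i) \<in> E\<^sup>*" "(y, i) \<in> E\<^sup>*"
    using \<open>b \<in> C\<close> step.hyps(2) step.prems unfolding C_def
    by (auto intro: rtrancl_trans converse_rtrancl_into_rtrancl)
  ultimately have "(y, z) \<in> Restr E C" using step.hyps(2) unfolding C_def by blast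
  moreover have "(a, y) \<in> (Restr E C)\<^sup>*"
    using step.IH step.hyps(2) step.prems by (meson converse_rtrancl_into_rtrancl)
  ultimately show ?case by (meson rtrancl_into_rtrancl)
qed

lemma exists_arc_to_new_class:
  fixes c :: "'a \<Rightarrow> 'b"
  assumes GV: "G \<subseteq> V \<times> V" and FV: "F \<subseteq> V \<times> V" and SV: "S \<subseteq> V"
    and classes: "\<forall>x\<in>V. \<forall>y\<in>V. c x = c y \<longrightarrow> (x, y) \<in> F\<^sup>*"
    and reach: "V \<subseteq> (F \<union> G)\<^sup>* `` S"
    and TG: "T \<subseteq> G" and not_all: "\<not> V \<subseteq> (F \<union> T)\<^sup>* `` S"
  obtains u w where "(u, w) \<in> G - T" "u \<in> (F \<union> T)\<^sup>* `` S" "w \<in> V - (F \<union> T)\<^sup>* `` S"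
    "c w \<notin> c ` ((F \<union> T)\<^sup>* `` S)"
proof -
  define R where "R = (F \<union> T)\<^sup>* `` S"
  have RV: "R \<subseteq> V" unfolding R_def using GV FV SV TG by (intro rtrancl_Image_subset) auto
  obtain v where v: "v \<in> V" "v \<notin> R" using not_all unfolding R_def by blast
  obtain s where s: "s \<in> S" "(s, v) \<in> (F \<union> G)\<^sup>*" using reach v(1) by blast
  have "s \<in> R" unfolding R_def using s(1) by blast
  then obtain u w where uw: "(u, w) \<in> F \<union> G" "u \<in> R" "w \<notin> R"
    using rtrancl_exit_arc[OF s(2) _ v(2)] by blast
  have wV: "w \<in> V" using uw(1) GV FV by blast
  have "(u, w) \<notin> F \<union> T"
    using uw(2,3) unfolding R_def by (meson Image_iff rtrancl.rtrancl_into_rtrancl)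
  then have "(u, w) \<in> G - T" using uw(1) by blast
  moreover have "c w \<notin> c ` R"
  proof
    assume "c w \<in> c ` R"
    then obtain y where y: "y \<in> R" "c w = c y" by auto
    have "y \<in> V" using y(1) RV by blast
    then have "(y, w) \<in> F\<^sup>*" using classes wV y(2) by simp
    then have "(y, w) \<in> (F \<union> T)\<^sup>*" using rtrancl_mono[of F "F \<union> T"] by blast
    then show False using y(1) uw(3) unfolding R_def by (meson Image_iff rtrancl_trans)
  qed
  ultimately show ?thesis using that uw(2,3) wV unfolding R_def by blast
qed

text \<open>Each added arc enters a class of \<open>c\<close> not reached before, which bounds their number.\<close>
lemma contracted_spanning_arcs:
  fixes c :: "'a \<Rightarrow> 'b"
  assumes fin: "finite V" and GV: "G \<subseteq> V \<times> V" and FV: "F \<subseteq> V \<times> V" and SV: "S \<subseteq> V"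
    and classes: "\<forall>x\<in>V. \<forall>y\<in>V. c x = c y \<longrightarrow> (x, y) \<in> F\<^sup>*"
    and reach: "V \<subseteq> (F \<union> G)\<^sup>* `` S"
  obtains T where "T \<subseteq> G" "card T + card (c ` S) \<le> card (c ` V)" "V \<subseteq> (F \<union> T)\<^sup>* `` S"
proof -
  define R where "R T = (F \<union> T)\<^sup>* `` S" for T
  have RV: "R T \<subseteq> V" if "T \<subseteq> G" for T
    unfolding R_def using that GV FV SV by (intro rtrancl_Image_subset) auto
  have grow: "\<exists>T\<subseteq>G. card T + card (c ` S) \<le> card (c ` V) \<and> V \<subseteq> R T"
    if "T \<subseteq> G" "card T + card (c ` S) \<le> card (c ` R T)" for T
    using that
  proof (induction "card (V - R T)" arbitrary: T rule: less_induct)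
    case less
    show ?case
    proof (cases "V \<subseteq> R T")
      case True
      then show ?thesis using less.prems RV by (metis subset_antisym)
    next
      case False
      then obtain u w where uw: "(u, w) \<in> G - T" "u \<in> R T" "w \<in> V - R T" "c w \<notin> c ` R T"
        using exists_arc_to_new_class[OF GV FV SV classes reach less.prems(1)] unfolding R_def by blast
      define T' where "T' = insert (u, w) T"
      have T'G: "T' \<subseteq> G" using uw(1) less.prems(1) unfolding T'_def by blast
      have "R T \<subseteq> R T'" unfolding R_def T'_def by (intro Image_mono rtrancl_mono) auto
      moreover have "w \<in> R T'"
        using uw(2) \<open>R T \<subseteq> R T'\<close> unfolding R_def T'_def
        by (meson Image_iff UnI2 insertI1 rtrancl.rtrancl_into_rtrancl subsetD)
      ultimately have grown: "insert w (R T) \<subseteq> R T'" by blast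
      have "card (V - R T') < card (V - R T)"
        using grown uw(3) fin by (intro psubset_card_mono) auto
      moreover have "card T' + card (c ` S) \<le> card (c ` R T')"
      proof -
        have "card (c ` insert w (R T)) \<le> card (c ` R T')"
          using grown RV[OF T'G] fin by (intro card_mono image_mono) (auto intro: finite_subset)
        moreover have "card (c ` insert w (R T)) = Suc (card (c ` R T))"
          using uw(4) RV[OF less.prems(1)] fin by (simp add: finite_subset)
        moreover have "finite T" using less.prems(1) GV fin by (meson finite_SigmaI finite_subset)
        ultimately show ?thesis using less.prems(2) uw(1) unfolding T'_def by simp
      qed
      ultimately show ?thesis using less.hyps T'G by blast
    qed
  qed
  have "card (c ` S) \<le> card (c ` R {})"
    using RV[of "{}"] fin unfolding R_def by (intro card_mono image_mono) (auto intro: finite_subset)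
  then show ?thesis using grow[of "{}"] that unfolding R_def by auto
qed

lemma representative_spanning_arcs:
  fixes c :: "'a \<Rightarrow> 'a"
  assumes fin: "finite V" and PV: "P \<subseteq> V \<times> V" and cV: "c ` V \<subseteq> V"
    and rep: "\<forall>v\<in>V. (c v, v) \<in> P\<^sup>*"
    and const: "\<forall>x\<in>V. \<forall>y\<in>V. (x, y) \<in> P\<^sup>* \<longrightarrow> c x = c y"
  obtains T where "T \<subseteq> P" "card T + card (c ` V) \<le> card V" "\<forall>v\<in>V. (c v, v) \<in> T\<^sup>*"
proof -
  have classes: "\<forall>x\<in>V. \<forall>y\<in>V. id x = id y \<longrightarrow> (x, y) \<in> {}\<^sup>*" by simp
  have reach: "V \<subseteq> ({} \<union> P)\<^sup>* `` (c ` V)" using rep by force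
  obtain T where T: "T \<subseteq> P" "card T + card (id ` c ` V) \<le> card (id ` V)"
    "V \<subseteq> ({} \<union> T)\<^sup>* `` (c ` V)"
    using contracted_spanning_arcs[OF fin PV _ cV classes reach] by blast
  have "(c v, v) \<in> T\<^sup>*" if v: "v \<in> V" for v
  proof -
    obtain u where u: "u \<in> V" "(c u, v) \<in> T\<^sup>*" using T(3) v by auto
    have "(c u, v) \<in> P\<^sup>*" using u(2) rtrancl_mono[OF T(1)] by blast
    then have "c (c u) = c v" using const cV u(1) v by blast
    moreover have "c (c u) = c u" using const cV rep u(1) by blast
    ultimately show ?thesis using u(2) by simp
  qed
  then show ?thesis using that T(1,2) by simp
qed

lemma class_spanning_arcs:
  fixes c :: "'a \<Rightarrow> 'a"
  assumes fin: "finite V" and PV: "P \<subseteq> V \<times> V" and cV: "c ` V \<subseteq> V"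
    and rep: "\<forall>v\<in>V. (c v, v) \<in> P\<^sup>* \<and> (v, c v) \<in> P\<^sup>*"
    and const: "\<forall>x\<in>V. \<forall>y\<in>V. (x, y) \<in> P\<^sup>* \<longrightarrow> c x = c y"
  obtains F where "F \<subseteq> P" "card F + 2 * card (c ` V) \<le> 2 * card V"
    "\<forall>x\<in>V. \<forall>y\<in>V. c x = c y \<longrightarrow> (x, y) \<in> F\<^sup>*"
proof -
  have rep1: "\<forall>v\<in>V. (c v, v) \<in> P\<^sup>*" using rep by blast
  obtain T1 where T1: "T1 \<subseteq> P" "card T1 + card (c ` V) \<le> card V" "\<forall>v\<in>V. (c v, v) \<in> T1\<^sup>*"
    using representative_spanning_arcs[OF fin PV cV rep1 const] by blast
  have const': "\<forall>x\<in>V. \<forall>y\<in>V. (x, y) \<in> (P\<inverse>)\<^sup>* \<longrightarrow> c x = c y"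
  proof (intro ballI impI)
    fix x y assume "x \<in> V" "y \<in> V" "(x, y) \<in> (P\<inverse>)\<^sup>*"
    then have "(y, x) \<in> P\<^sup>*" by (simp add: rtrancl_converse)
    then show "c x = c y" using const \<open>x \<in> V\<close> \<open>y \<in> V\<close> by metis
  qed
  have PV': "P\<inverse> \<subseteq> V \<times> V" using PV by blast
  have rep': "\<forall>v\<in>V. (c v, v) \<in> (P\<inverse>)\<^sup>*" using rep by (simp add: rtrancl_converse)
  obtain T2 where T2: "T2 \<subseteq> P\<inverse>" "card T2 + card (c ` V) \<le> card V" "\<forall>v\<in>V. (c v, v) \<in> T2\<^sup>*"
    using representative_spanning_arcs[OF fin PV' cV rep' const'] by blast
  define F where "F = T1 \<union> T2\<inverse>"
  have "F \<subseteq> P" using T1(1) T2(1) unfolding F_def by blast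
  moreover have "card F + 2 * card (c ` V) \<le> 2 * card V"
    using card_Un_le[of T1 "T2\<inverse>"] T1(2) T2(2) unfolding F_def card_inverse by linarith
  moreover have "(x, y) \<in> F\<^sup>*" if "x \<in> V" "y \<in> V" "c x = c y" for x y
  proof -
    have "(c x, x) \<in> T2\<^sup>*" using T2(3) \<open>x \<in> V\<close> by blast
    then have "(x, c x) \<in> (T2\<inverse>)\<^sup>*" by (simp add: rtrancl_converse)
    then have "(x, c x) \<in> F\<^sup>*" using rtrancl_mono[of "T2\<inverse>" F] unfolding F_def by blast
    moreover have "(c y, y) \<in> F\<^sup>*"
      using T1(3) \<open>y \<in> V\<close> rtrancl_mono[of T1 F] unfolding F_def by blast
    ultimately show ?thesis using \<open>c x = c y\<close> by (metis rtrancl_trans)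
  qed
  ultimately show ?thesis using that[of F] by blast
qed

lemma strongly_connecting_arcs:
  fixes c :: "'a \<Rightarrow> 'b"
  assumes fin: "finite V" and r: "r \<in> V" and FV: "F \<subseteq> V \<times> V" and NV: "N \<subseteq> V \<times> V"
    and classes: "\<forall>x\<in>V. \<forall>y\<in>V. c x = c y \<longrightarrow> (x, y) \<in> F\<^sup>*"
    and strong: "V \<times> V \<subseteq> (F \<union> N)\<^sup>*"
  obtains T where "T \<subseteq> N" "card T + 2 \<le> 2 * card (c ` V)" "V \<times> V \<subseteq> (F \<union> T)\<^sup>*"
proof -
  have rV: "{r} \<subseteq> V" using r by blast
  have "V \<subseteq> (F \<union> N)\<^sup>* `` {r}" using strong r by blast
  then obtain T1 where T1: "T1 \<subseteq> N" "card T1 + 1 \<le> card (c ` V)" "V \<subseteq> (F \<union> T1)\<^sup>* `` {r}"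
    using contracted_spanning_arcs[OF fin NV FV rV classes] by auto
  have FV': "F\<inverse> \<subseteq> V \<times> V" and NV': "N\<inverse> \<subseteq> V \<times> V" using FV NV by blast+
  have classes': "\<forall>x\<in>V. \<forall>y\<in>V. c x = c y \<longrightarrow> (x, y) \<in> (F\<inverse>)\<^sup>*"
    using classes by (simp add: rtrancl_converse)
  have "V \<subseteq> ((F \<union> N)\<inverse>)\<^sup>* `` {r}" using strong r by (auto simp: rtrancl_converse)
  then have "V \<subseteq> (F\<inverse> \<union> N\<inverse>)\<^sup>* `` {r}" by (simp only: converse_Un)
  then obtain T2 where T2: "T2 \<subseteq> N\<inverse>" "card T2 + 1 \<le> card (c ` V)"
    "V \<subseteq> (F\<inverse> \<union> T2)\<^sup>* `` {r}"
    using contracted_spanning_arcs[OF fin NV' FV' rV classes'] by auto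
  define T where "T = T1 \<union> T2\<inverse>"
  have "T \<subseteq> N" using T1(1) T2(1) unfolding T_def by blast
  moreover have "card T + 2 \<le> 2 * card (c ` V)"
    using card_Un_le[of T1 "T2\<inverse>"] T1(2) T2(2) unfolding T_def card_inverse by linarith
  moreover have "(x, y) \<in> (F \<union> T)\<^sup>*" if "x \<in> V" "y \<in> V" for x y
  proof -
    have eq: "(F \<union> T2\<inverse>)\<inverse> = F\<inverse> \<union> T2" by auto
    have "(r, x) \<in> (F\<inverse> \<union> T2)\<^sup>*" using T2(3) \<open>x \<in> V\<close> by blast
    then have "(r, x) \<in> ((F \<union> T2\<inverse>)\<^sup>*)\<inverse>" by (simp only: rtrancl_converse[symmetric] eq)
    then have "(x, r) \<in> (F \<union> T2\<inverse>)\<^sup>*" by blast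
    then have "(x, r) \<in> (F \<union> T)\<^sup>*" using rtrancl_mono[of "F \<union> T2\<inverse>" "F \<union> T"] unfolding T_def by blast
    moreover have "(r, y) \<in> (F \<union> T)\<^sup>*"
      using T1(3) \<open>y \<in> V\<close> rtrancl_mono[of "F \<union> T1" "F \<union> T"] unfolding T_def by blast
    ultimately show ?thesis by (rule rtrancl_trans)
  qed
  ultimately show ?thesis using that[of T] by blast
qed

lemma strongly_connected_converse_arcs:
  assumes "F\<inverse> \<subseteq> F\<^sup>*" and "V \<times> V \<subseteq> (F \<union> T)\<^sup>*"
  shows "V \<times> V \<subseteq> (F \<union> T\<inverse>)\<^sup>*"
proof -
  have "(F \<union> T)\<inverse> \<subseteq> (F \<union> T\<inverse>)\<^sup>*"
    using assms(1) rtrancl_mono[of F "F \<union> T\<inverse>"] by blast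
  then have "((F \<union> T)\<^sup>*)\<inverse> \<subseteq> (F \<union> T\<inverse>)\<^sup>*"
    unfolding rtrancl_converse[symmetric] by (rule rtrancl_subset_rtrancl)
  then show ?thesis using assms(2) by blast
qed

lemma sparse_spanning_subgraph:
  fixes V :: "'a set" and P N :: "'a rel"
  assumes fin: "finite V" and r: "r \<in> V" and PV: "P \<subseteq> V \<times> V" and NV: "N \<subseteq> V \<times> V"
    and strong: "V \<times> V \<subseteq> (P \<union> N)\<^sup>*"
    and P_rev: "P\<inverse> \<subseteq> P\<^sup>*"
  obtains F T where "F \<subseteq> P" "T \<subseteq> N" "card F + card T + 2 \<le> 2 * card V"
    "P \<subseteq> F\<^sup>*" "V \<times> V \<subseteq> (F \<union> T)\<^sup>*" "V \<times> V \<subseteq> (F \<union> T\<inverse>)\<^sup>*"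
proof -
  have P_sym: "(P\<^sup>*)\<inverse> \<subseteq> P\<^sup>*"
    using rtrancl_subset_rtrancl[OF P_rev] by (simp add: rtrancl_converse)
  define c where "c v = (SOME u. (v, u) \<in> P\<^sup>*)" for v
  have to_c: "(v, c v) \<in> P\<^sup>*" for v
    unfolding c_def by (rule someI[of _ v]) simp
  have c_eq: "c x = c y" if "(x, y) \<in> P\<^sup>*" for x y
  proof -
    have "(y, x) \<in> P\<^sup>*" using that P_sym by blast
    then have "(\<lambda>u. (x, u) \<in> P\<^sup>*) = (\<lambda>u. (y, u) \<in> P\<^sup>*)"
      using that by (auto intro: rtrancl_trans)
    then show ?thesis unfolding c_def by simp
  qed
  have cV: "c ` V \<subseteq> V"
    using rtrancl_Image_subset[OF PV, of "{v}" for v] to_c by blast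
  have rep: "\<forall>v\<in>V. (c v, v) \<in> P\<^sup>* \<and> (v, c v) \<in> P\<^sup>*" using to_c P_sym by blast
  obtain F where F: "F \<subseteq> P" "card F + 2 * card (c ` V) \<le> 2 * card V"
    and classes: "\<forall>x\<in>V. \<forall>y\<in>V. c x = c y \<longrightarrow> (x, y) \<in> F\<^sup>*"
    using class_spanning_arcs[OF fin PV cV rep] c_eq by blast
  have P_F: "P \<subseteq> F\<^sup>*" using PV classes c_eq by blast
  have FV: "F \<subseteq> V \<times> V" using F(1) PV by blast
  have "V \<times> V \<subseteq> (F \<union> N)\<^sup>*"
  proof -
    have "P \<union> N \<subseteq> (F \<union> N)\<^sup>*" using P_F rtrancl_mono[of F "F \<union> N"] by blast
    then show ?thesis using strong rtrancl_subset_rtrancl by blast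
  qed
  then obtain T where T: "T \<subseteq> N" "card T + 2 \<le> 2 * card (c ` V)" "V \<times> V \<subseteq> (F \<union> T)\<^sup>*"
    using strongly_connecting_arcs[OF fin r FV NV classes] by blast
  have "F\<inverse> \<subseteq> F\<^sup>*"
    using F(1) P_rev rtrancl_subset_rtrancl[OF P_F] by blast
  then have "V \<times> V \<subseteq> (F \<union> T\<inverse>)\<^sup>*" using T(3) by (rule strongly_connected_converse_arcs)
  moreover have "card F + card T + 2 \<le> 2 * card V" using F(2) T(2) by linarith
  ultimately show ?thesis using that F(1) T(1,3) P_F by blast
qed

lemma irreducible_on_iff: "irreducible_on M S \<longleftrightarrow> S \<times> S \<subseteq> (arcs_on M S)\<^sup>*"
  unfolding irreducible_on_def by (auto simp: card_Suc_eq)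

lemma arcs_on_subset: "arcs_on M S \<subseteq> S \<times> S"
  unfolding arcs_on_def by blast

lemma irr_component_scc:
  fixes M :: sign_matrix
  assumes "i < n"
  defines "E \<equiv> arcs_on M {0..<n}"
  shows "irr_component M n {x. (i, x) \<in> E\<^sup>* \<and> (x, i) \<in> E\<^sup>*}"
proof -
  define C where "C = {x. (i, x) \<in> E\<^sup>* \<and> (x, i) \<in> E\<^sup>*}"
  have "C \<subseteq> E\<^sup>* `` {i}" unfolding C_def by blast
  also have "\<dots> \<subseteq> {0..<n}"
    using assms(1) arcs_on_subset unfolding E_def by (intro rtrancl_Image_subset) auto
  finally have Cn: "C \<subseteq> {0..<n}" .
  have arcs_C: "arcs_on M C = Restr E C" using Cn unfolding E_def arcs_on_def by blast
  have "C \<times> C \<subseteq> (arcs_on M C)\<^sup>*"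
  proof clarify
    fix a b assume "a \<in> C" "b \<in> C"
    then have "(a, b) \<in> E\<^sup>*" unfolding C_def by (blast intro: rtrancl_trans)
    then have "(a, b) \<in> (Restr E C)\<^sup>*"
      using rtrancl_within_scc[where E = E and i = i, of a b b] \<open>a \<in> C\<close> \<open>b \<in> C\<close>
      unfolding C_def by simp
    then show "(a, b) \<in> (arcs_on M C)\<^sup>*" unfolding arcs_C .
  qed
  then have irr: "irreducible_on M C" by (simp add: irreducible_on_iff)
  have max: "\<not> irreducible_on M \<beta>" if "C \<subset> \<beta>" "\<beta> \<subseteq> {0..<n}" for \<beta>
  proof
    assume "irreducible_on M \<beta>"
    then have "\<beta> \<times> \<beta> \<subseteq> E\<^sup>*"
      using rtrancl_mono[of "arcs_on M \<beta>" E] that(2) unfolding irreducible_on_iff E_def arcs_on_def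
      by blast
    moreover have "i \<in> \<beta>" using that(1) unfolding C_def by blast
    ultimately have "\<beta> \<subseteq> C" unfolding C_def by blast
    then show False using that(1) by blast
  qed
  have "i \<in> C" unfolding C_def by simp
  then show ?thesis using Cn irr max unfolding irr_component_def C_def by blast
qed

definition pos_arcs :: "sign_matrix \<Rightarrow> nat \<Rightarrow> (nat \<times> nat) set" where
  "pos_arcs A n = {(i, j). i < n \<and> j < n \<and> A i j = Pos}"

definition neg_arcs :: "sign_matrix \<Rightarrow> nat \<Rightarrow> (nat \<times> nat) set" where
  "neg_arcs A n = {(i, j). i < n \<and> j < n \<and> A i j = Neg}"

lemma arcs_on_pos_part: "arcs_on (pos_part A) {0..<n} = pos_arcs A n"
  unfolding arcs_on_def pos_part_def pos_arcs_def by auto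

lemma arcs_on_eq_pos_neg_arcs: "arcs_on A {0..<n} = pos_arcs A n \<union> neg_arcs A n"
  unfolding arcs_on_def pos_arcs_def neg_arcs_def by (auto intro: sign.exhaust)

lemma pos_arcs_converse_subset:
  assumes "\<forall>\<alpha> \<beta>. irr_component (pos_part A) n \<alpha> \<and> irr_component (pos_part A) n \<beta> \<and> \<alpha> \<noteq> \<beta>
             \<longrightarrow> (\<forall>i\<in>\<alpha>. \<forall>j\<in>\<beta>. A i j \<noteq> Pos)"
  shows "(pos_arcs A n)\<inverse> \<subseteq> (pos_arcs A n)\<^sup>*"
proof clarify
  fix i j assume ij: "(i, j) \<in> pos_arcs A n"
  define P where "P = pos_arcs A n"
  define scc where "scc x = {y. (x, y) \<in> P\<^sup>* \<and> (y, x) \<in> P\<^sup>*}" for x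
  have "i < n" "j < n" "A i j = Pos" using ij unfolding pos_arcs_def by auto
  then have "irr_component (pos_part A) n (scc i)" "irr_component (pos_part A) n (scc j)"
    using irr_component_scc[of _ n "pos_part A"] unfolding scc_def P_def arcs_on_pos_part by auto
  moreover have "i \<in> scc i" "j \<in> scc j" unfolding scc_def by auto
  ultimately have "scc i = scc j" using assms \<open>A i j = Pos\<close> by blast
  then show "(j, i) \<in> (pos_arcs A n)\<^sup>*" using \<open>j \<in> scc j\<close> unfolding scc_def P_def by blast
qed

definition subpattern :: "sign_matrix \<Rightarrow> sign_matrix \<Rightarrow> bool" where
  "subpattern X Y \<longleftrightarrow> (\<forall>i j. X i j = Zero \<or> X i j = Y i j)"

lemma irreducible_on_mono:
  assumes "irreducible_on X S" "arcs_on X S \<subseteq> arcs_on Y S"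
  shows "irreducible_on Y S"
  using assms rtrancl_mono[OF assms(2)] unfolding irreducible_on_iff by blast

lemma AP_irreducible_subpattern:
  assumes "AP_irreducible X n" "subpattern X Y"
  shows "AP_irreducible Y n"
proof -
  have pos: "X i j = Pos \<Longrightarrow> Y i j = Pos" for i j
    using assms(2) unfolding subpattern_def by (metis sign.distinct(3))
  have neg: "X i j = Neg \<Longrightarrow> Y i j = Neg" for i j
    using assms(2) unfolding subpattern_def by (metis sign.distinct(5))
  have "arcs_on X S \<subseteq> arcs_on Y S" for S
    using assms(2) unfolding subpattern_def arcs_on_def by (auto; metis)
  moreover have "arcs_on (B_mat X) S \<subseteq> arcs_on (B_mat Y) S" for S
    using pos neg unfolding arcs_on_def B_mat_def pos_part_def neg_part_def by auto
  ultimately show ?thesis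
    using assms(1) pos irreducible_on_mono unfolding AP_irreducible_def irreducible_def by metis
qed

definition restrict_entries :: "sign_matrix \<Rightarrow> (nat \<times> nat) set \<Rightarrow> sign_matrix" where
  "restrict_entries A H = (\<lambda>i j. if (i, j) \<in> H then A i j else Zero)"

lemma minimally_AP_irreducible_nnz_le_card:
  assumes "minimally_AP_irreducible A n" "finite H"
    and "AP_irreducible (restrict_entries A H) n"
  shows "nnz A n \<le> card H"
proof -
  have "{(i, j). i < n \<and> j < n \<and> A i j \<noteq> Zero} \<subseteq> H"
  proof clarify
    fix i j assume ij: "i < n" "j < n" "A i j \<noteq> Zero"
    show "(i, j) \<in> H"
    proof (rule ccontr)
      assume "(i, j) \<notin> H"
      then have "subpattern (restrict_entries A H) (zero_entry A i j)"
        unfolding subpattern_def restrict_entries_def zero_entry_def by auto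
      then have "AP_irreducible (zero_entry A i j) n"
        using assms(3) by (rule AP_irreducible_subpattern[rotated])
      then show False using assms(1) ij unfolding minimally_AP_irreducible_def by blast
    qed
  qed
  then show ?thesis unfolding nnz_def using assms(2) by (rule card_mono[rotated])
qed

lemma AP_irreducible_restrict_entries:
  assumes F: "F \<subseteq> pos_arcs A n" and T: "T \<subseteq> neg_arcs A n"
    and strong: "{0..<n} \<times> {0..<n} \<subseteq> (F \<union> T)\<^sup>*"
    and B_strong: "{0..<n} \<times> {0..<n} \<subseteq> (F \<union> T\<inverse>)\<^sup>*"
    and out: "\<forall>i<n. i \<in> Domain F" and into: "\<forall>j<n. j \<in> Range F"
  shows "AP_irreducible (restrict_entries A (F \<union> T)) n"
proof -
  define A' where "A' = restrict_entries A (F \<union> T)"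
  have pos: "A' i j = Pos" if "(i, j) \<in> F" for i j
    using that F unfolding A'_def restrict_entries_def pos_arcs_def by auto
  have neg: "A' i j = Neg" if "(i, j) \<in> T" for i j
    using that F T unfolding A'_def restrict_entries_def pos_arcs_def neg_arcs_def by auto
  have "arcs_on A' {0..<n} = F \<union> T"
    using F T unfolding arcs_on_def A'_def restrict_entries_def pos_arcs_def neg_arcs_def by auto
  moreover have "F \<union> T\<inverse> \<subseteq> arcs_on (B_mat A') {0..<n}"
    using F T pos neg unfolding arcs_on_def B_mat_def pos_part_def neg_part_def pos_arcs_def neg_arcs_def
    by auto
  moreover have "\<forall>i<n. \<exists>j<n. A' i j = Pos" and "\<forall>j<n. \<exists>i<n. A' i j = Pos"
    using out into F pos unfolding pos_arcs_def by blast+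
  ultimately show ?thesis
    using strong B_strong rtrancl_mono[of "F \<union> T\<inverse>" "arcs_on (B_mat A') {0..<n}"]
    unfolding AP_irreducible_def irreducible_def irreducible_on_iff A'_def[symmetric] by auto
qed

lemma minimally_AP_irreducible_nnz_bound:
  assumes "0 < n"
    and min: "minimally_AP_irreducible A n"
    and diag: "\<forall>i<n. A i i = Zero"
    and no_pos_between: "\<forall>\<alpha> \<beta>. irr_component (pos_part A) n \<alpha> \<and> irr_component (pos_part A) n \<beta> \<and> \<alpha> \<noteq> \<beta>
           \<longrightarrow> (\<forall>i\<in>\<alpha>. \<forall>j\<in>\<beta>. A i j \<noteq> Pos)"
  shows "nnz A n + 2 \<le> 2 * n"
proof -
  define P N where "P = pos_arcs A n" and "N = neg_arcs A n"
  have AP: "AP_irreducible A n" using min unfolding minimally_AP_irreducible_def by blast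
  have strong_PN: "{0..<n} \<times> {0..<n} \<subseteq> (P \<union> N)\<^sup>*"
    using AP unfolding AP_irreducible_def irreducible_def irreducible_on_iff P_def N_def
    by (simp add: arcs_on_eq_pos_neg_arcs)
  have P_rev: "P\<inverse> \<subseteq> P\<^sup>*" using pos_arcs_converse_subset[OF no_pos_between] unfolding P_def .
  have PV: "P \<subseteq> {0..<n} \<times> {0..<n}" and NV: "N \<subseteq> {0..<n} \<times> {0..<n}"
    unfolding P_def N_def pos_arcs_def neg_arcs_def by auto
  have "finite {0..<n}" "0 \<in> {0..<n}" using \<open>0 < n\<close> by auto
  then obtain F T where F: "F \<subseteq> P" and T: "T \<subseteq> N"
    and card: "card F + card T + 2 \<le> 2 * card {0..<n}" and P_F: "P \<subseteq> F\<^sup>*"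
    and strong: "{0..<n} \<times> {0..<n} \<subseteq> (F \<union> T)\<^sup>*" "{0..<n} \<times> {0..<n} \<subseteq> (F \<union> T\<inverse>)\<^sup>*"
    by (rule sparse_spanning_subgraph[OF _ _ PV NV strong_PN P_rev])
  have row_col: "i \<in> Domain F \<and> i \<in> Range F" if i: "i < n" for i
  proof -
    obtain j where "j < n" "A i j = Pos" using AP i unfolding AP_irreducible_def by blast
    then have "(i, j) \<in> P" "i \<noteq> j" using diag i unfolding P_def pos_arcs_def by auto
    moreover have "P\<^sup>* \<subseteq> F\<^sup>*" using P_F by (rule rtrancl_subset_rtrancl)
    ultimately have "(i, j) \<in> F\<^sup>*" "(j, i) \<in> F\<^sup>*" using P_F P_rev by blast+
    then show ?thesis using rtrancl_cycle_in_Domain_Range \<open>i \<noteq> j\<close> by metis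
  qed
  have "finite (F \<union> T)"
  proof (rule finite_subset)
    show "F \<union> T \<subseteq> {0..<n} \<times> {0..<n}" using F T PV NV by blast
  qed simp
  moreover have "AP_irreducible (restrict_entries A (F \<union> T)) n"
    using F T row_col unfolding P_def N_def by (intro AP_irreducible_restrict_entries strong) auto
  ultimately have "nnz A n \<le> card (F \<union> T)" by (rule minimally_AP_irreducible_nnz_le_card[OF min])
  then show ?thesis using card card_Un_le[of F T] by simp
qed

lemma nnz_eq_sum_row_nnz: "nnz A n = (\<Sum>i<n. row_nnz A n i)"
proof -
  have "{(i, j). i < n \<and> j < n \<and> A i j \<noteq> Zero} = (SIGMA i:{..<n}. {j. j < n \<and> A i j \<noteq> Zero})"
    by auto
  then show ?thesis unfolding nnz_def row_nnz_def by simp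
qed

lemma nnz_eq_sum_col_nnz: "nnz A n = (\<Sum>j<n. col_nnz A n j)"
proof -
  have "{(i, j). i < n \<and> j < n \<and> A i j \<noteq> Zero} = (SIGMA j:{..<n}. {i. i < n \<and> A i j \<noteq> Zero})\<inverse>"
    by auto
  then show ?thesis unfolding nnz_def col_nnz_def by simp
qed

lemma AP_irreducible_row_nnz_pos:
  assumes "AP_irreducible A n" "i < n"
  shows "0 < row_nnz A n i"
proof -
  obtain j where "j < n" "A i j = Pos" using assms unfolding AP_irreducible_def by blast
  then show ?thesis unfolding row_nnz_def by (auto simp: card_gt_0_iff)
qed

lemma AP_irreducible_col_nnz_pos:
  assumes "AP_irreducible A n" "j < n"
  shows "0 < col_nnz A n j"
proof -
  obtain i where "i < n" "A i j = Pos" using assms unfolding AP_irreducible_def by blast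
  then show ?thesis unfolding col_nnz_def by (auto simp: card_gt_0_iff)
qed

lemma two_le_card_eq_one:
  fixes f :: "'a \<Rightarrow> nat"
  assumes "finite I" "\<forall>i\<in>I. 0 < f i" "sum f I + 2 \<le> 2 * card I"
  shows "2 \<le> card {i\<in>I. f i = 1}"
proof -
  have "card {i\<in>I. f i = 1} = (\<Sum>i\<in>I. if f i = 1 then 1 else 0)"
    using assms(1) by (simp add: sum.inter_filter[symmetric])
  moreover have "(\<Sum>i\<in>I. 2) \<le> (\<Sum>i\<in>I. f i + (if f i = 1 then 1 else 0))"
    using assms(2) by (intro sum_mono) auto
  ultimately show ?thesis using assms(3) by (simp add: sum.distrib)
qed

theorem lemma3p11:
  fixes A :: sign_matrix and n :: nat
  assumes "n \<ge> 1"
    and "minimally_AP_irreducible A n"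
    and "\<forall>i<n. A i i = Zero"
    and "\<forall>\<alpha> \<beta>. irr_component (pos_part A) n \<alpha> \<and> irr_component (pos_part A) n \<beta> \<and> \<alpha> \<noteq> \<beta>
           \<longrightarrow> (\<forall>i\<in>\<alpha>. \<forall>j\<in>\<beta>. A i j \<noteq> Pos)"
  shows "nnz A n \<le> 2 * n - 2
         \<and> card {i. i < n \<and> row_nnz A n i = 1} \<ge> 2
         \<and> card {j. j < n \<and> col_nnz A n j = 1} \<ge> 2"
proof -
  have bound: "nnz A n + 2 \<le> 2 * n"
    using assms by (intro minimally_AP_irreducible_nnz_bound) auto
  have AP: "AP_irreducible A n" using assms(2) unfolding minimally_AP_irreducible_def by blast
  have "2 \<le> card {i \<in> {..<n}. row_nnz A n i = 1}"
    using bound AP_irreducible_row_nnz_pos[OF AP]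
    by (intro two_le_card_eq_one) (auto simp: nnz_eq_sum_row_nnz)
  moreover have "2 \<le> card {j \<in> {..<n}. col_nnz A n j = 1}"
    using bound AP_irreducible_col_nnz_pos[OF AP]
    by (intro two_le_card_eq_one) (auto simp: nnz_eq_sum_col_nnz)
  ultimately show ?thesis using bound by simp
qed

end
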